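(* For every finite $K\ge1$, the exact sequence \[0\to\bigoplus_{i=1}^K\mathbb Z\overset{i}{\to}\bigoplus_{i=1}^K\mathbb Z[\tfrac12]\overset{\pi}{\to}\bigoplus_{i=1}^K\mathbb Z(2^\infty)\to0\] (componentwise inclusion and quotient maps) is coarsely split.
   Context: $\mathbb Z[\tfrac12]=\{m/2^k:m\in\mathbb Z,k\ge0\}$; $\mathbb Z(2^\infty)\cong\mathbb Z[\tfrac12]/\mathbb Z$. A proper left invariant metric is $d(g,h)=\|g^{-1}h\|$ for a proper norm (trivial only at identity, symmetric, subadditive, finite balls). An exact sequence $0\to A\overset{i}{\to}G\overset{\pi}{\to}Q\to0$ is coarsely split if there are proper left invariant metrics $d_A,d_G,d_Q$ and a coarse equivalence $f:(G,d_G)\to(A\oplus Q,d_A\oplus d_Q)$ ($\ell_1$ sum metric) with $f\circ i$ at bounded distance from $a\mapsto(a,0)$ and $\pi'\circ f$ at bounded distance from $\pi$, $\pi'$ the projection onto $Q$. Coarse maps: for each $\delta$ there is $\epsilon$ with $d(x,y)\le\delta\Rightarrow d(f x,f y)\le\epsilon$; coarse equivalences are coarse maps with coarse inverses up to bounded distance. *)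

theory Defs
  imports Complex_Main "HOL-Algebra.Group" "HOL-Algebra.Coset"
begin

definition proper_norm :: "('a, 'b) monoid_scheme \<Rightarrow> ('a \<Rightarrow> real) \<Rightarrow> bool" where
  "proper_norm G N \<longleftrightarrow>
     (\<forall>g\<in>carrier G. N g = 0 \<longleftrightarrow> g = \<one>\<^bsub>G\<^esub>) \<and>
     (\<forall>g\<in>carrier G. N (inv\<^bsub>G\<^esub> g) = N g) \<and>
     (\<forall>g\<in>carrier G. \<forall>h\<in>carrier G. N (g \<otimes>\<^bsub>G\<^esub> h) \<le> N g + N h) \<and>
     (\<forall>r::real. finite {g\<in>carrier G. N g \<le> r})"

definition norm_dist :: "('a, 'b) monoid_scheme \<Rightarrow> ('a \<Rightarrow> real) \<Rightarrow> 'a \<Rightarrow> 'a \<Rightarrow> real" where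
  "norm_dist G N g h = N (inv\<^bsub>G\<^esub> g \<otimes>\<^bsub>G\<^esub> h)"

definition coarse_map ::
  "'x set \<Rightarrow> ('x \<Rightarrow> 'x \<Rightarrow> real) \<Rightarrow> 'y set \<Rightarrow> ('y \<Rightarrow> 'y \<Rightarrow> real) \<Rightarrow> ('x \<Rightarrow> 'y) \<Rightarrow> bool" where
  "coarse_map X dX Y dY f \<longleftrightarrow>
     (\<forall>x\<in>X. f x \<in> Y) \<and>
     (\<forall>\<delta>. \<exists>\<epsilon>. \<forall>x\<in>X. \<forall>y\<in>X. dX x y \<le> \<delta> \<longrightarrow> dY (f x) (f y) \<le> \<epsilon>)"

definition coarse_equivalence ::
  "'x set \<Rightarrow> ('x \<Rightarrow> 'x \<Rightarrow> real) \<Rightarrow> 'y set \<Rightarrow> ('y \<Rightarrow> 'y \<Rightarrow> real) \<Rightarrow> ('x \<Rightarrow> 'y) \<Rightarrow> bool" where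
  "coarse_equivalence X dX Y dY f \<longleftrightarrow>
     coarse_map X dX Y dY f \<and>
     (\<exists>g. coarse_map Y dY X dX g \<and>
          (\<exists>C. (\<forall>x\<in>X. dX (g (f x)) x \<le> C) \<and> (\<forall>y\<in>Y. dY (f (g y)) y \<le> C)))"

definition short_exact ::
  "('a, 'm) monoid_scheme \<Rightarrow> ('g, 'n) monoid_scheme \<Rightarrow> ('q, 'o) monoid_scheme
   \<Rightarrow> ('a \<Rightarrow> 'g) \<Rightarrow> ('g \<Rightarrow> 'q) \<Rightarrow> bool" where
  "short_exact A G Q i p \<longleftrightarrow>
     group A \<and> group G \<and> group Q \<and>
     i \<in> hom A G \<and> p \<in> hom G Q \<and>
     inj_on i (carrier A) \<and> p ` carrier G = carrier Q \<and>
     i ` carrier A = {g\<in>carrier G. p g = \<one>\<^bsub>Q\<^esub>}"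

definition coarsely_split ::
  "('a, 'm) monoid_scheme \<Rightarrow> ('g, 'n) monoid_scheme \<Rightarrow> ('q, 'o) monoid_scheme
   \<Rightarrow> ('a \<Rightarrow> 'g) \<Rightarrow> ('g \<Rightarrow> 'q) \<Rightarrow> bool" where
  "coarsely_split A G Q i p \<longleftrightarrow>
     short_exact A G Q i p \<and>
     (\<exists>NA NG NQ f.
        proper_norm A NA \<and> proper_norm G NG \<and> proper_norm Q NQ \<and>
        (let dA = norm_dist A NA; dG = norm_dist G NG; dQ = norm_dist Q NQ;
             dS = (\<lambda>(a, q) (a', q'). dA a a' + dQ q q') in
         coarse_equivalence (carrier G) dG (carrier A \<times> carrier Q) dS f \<and>
         (\<exists>C. \<forall>a\<in>carrier A. dS (f (i a)) (a, \<one>\<^bsub>Q\<^esub>) \<le> C) \<and>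
         (\<exists>C. \<forall>g\<in>carrier G. dQ (snd (f g)) (p g) \<le> C)))"

definition dyadic :: "rat \<Rightarrow> bool" where
  "dyadic q \<longleftrightarrow> (\<exists>m::int. \<exists>k::nat. q = of_int m / 2 ^ k)"

definition frac_rat :: "rat \<Rightarrow> rat" where
  "frac_rat x = x - of_int \<lfloor>x\<rfloor>"

definition Zsum :: "nat \<Rightarrow> (nat \<Rightarrow> int) monoid" where
  "Zsum K = \<lparr>carrier = {v. \<forall>n\<ge>K. v n = 0},
             monoid.mult = (\<lambda>v w n. v n + w n), one = (\<lambda>_. 0)\<rparr>"

definition Dsum :: "nat \<Rightarrow> (nat \<Rightarrow> rat) monoid" where
  "Dsum K = \<lparr>carrier = {v. (\<forall>n<K. dyadic (v n)) \<and> (\<forall>n\<ge>K. v n = 0)},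
             monoid.mult = (\<lambda>v w n. v n + w n), one = (\<lambda>_. 0)\<rparr>"

text \<open>Direct sum of K copies of Z(2^\<infinity>) = Z[1/2]/Z, elements represented by
  their unique representatives in [0,1).\<close>
definition Psum :: "nat \<Rightarrow> (nat \<Rightarrow> rat) monoid" where
  "Psum K = \<lparr>carrier = {v. (\<forall>n<K. dyadic (v n) \<and> 0 \<le> v n \<and> v n < 1) \<and> (\<forall>n\<ge>K. v n = 0)},
             monoid.mult = (\<lambda>v w n. frac_rat (v n + w n)), one = (\<lambda>_. 0)\<rparr>"

definition incl_sum :: "(nat \<Rightarrow> int) \<Rightarrow> (nat \<Rightarrow> rat)" where
  "incl_sum v = (\<lambda>n. of_int (v n))"

definition quot_sum :: "(nat \<Rightarrow> rat) \<Rightarrow> (nat \<Rightarrow> rat)" where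
  "quot_sum v = (\<lambda>n. frac_rat (v n))"

end

theory Submission
  imports Defs "HOL-Algebra.Elementary_Groups"
begin

text \<open>
  Everything in the statement is coordinatewise: the groups are K-fold direct powers, and
  the norm of a direct power can be taken to be the sum of the coordinate norms. Distances
  then add up over the K coordinates, every bound is multiplied by K, and a coarse splitting
  of one coordinate yields one of the power. So it suffices to split
  \<open>0 \<rightarrow> \<int> \<rightarrow> \<int>[1/2] \<rightarrow> \<int>(2\<^sup>\<infinity>) \<rightarrow> 0\<close> coarsely.
  There we use the norms \<open>|a|\<close> on \<open>\<int>\<close>, \<open>|x| + ln (den x)\<close> on \<open>\<int>[1/2]\<close> and
  \<open>ln (den q)\<close> on \<open>\<int>(2\<^sup>\<infinity>)\<close>; they are subadditive because denominators are submultiplicative,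
  and proper because only finitely many rationals have bounded size and bounded denominator.
  The map \<open>x \<mapsto> (\<lfloor>x\<rfloor>, frac x)\<close> is a bijection onto \<open>\<int> \<times> \<int>(2\<^sup>\<infinity>)\<close> with inverse
  \<open>(a, q) \<mapsto> a + q\<close>; both change distances by at most a factor 2 plus 1, since
  \<open>den (frac y - frac x) = den (y - x)\<close> and \<open>|\<lfloor>y\<rfloor> - \<lfloor>x\<rfloor>| \<le> |y - x| + 1\<close>.
\<close>

section \<open>Finite direct powers of groups\<close>

definition direct_power :: "nat \<Rightarrow> ('a, 'b) monoid_scheme \<Rightarrow> (nat \<Rightarrow> 'a) monoid" where
  "direct_power K H =
     \<lparr>carrier = {v. (\<forall>n<K. v n \<in> carrier H) \<and> (\<forall>n\<ge>K. v n = \<one>\<^bsub>H\<^esub>)},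
      monoid.mult = (\<lambda>v w n. v n \<otimes>\<^bsub>H\<^esub> w n), one = (\<lambda>_. \<one>\<^bsub>H\<^esub>)\<rparr>"

lemma carrier_direct_power:
  "v \<in> carrier (direct_power K H) \<longleftrightarrow> (\<forall>n<K. v n \<in> carrier H) \<and> (\<forall>n\<ge>K. v n = \<one>\<^bsub>H\<^esub>)"
  by (simp add: direct_power_def)

lemma mult_direct_power [simp]: "v \<otimes>\<^bsub>direct_power K H\<^esub> w = (\<lambda>n. v n \<otimes>\<^bsub>H\<^esub> w n)"
  by (simp add: direct_power_def)

lemma one_direct_power [simp]: "\<one>\<^bsub>direct_power K H\<^esub> = (\<lambda>_. \<one>\<^bsub>H\<^esub>)"
  by (simp add: direct_power_def)

lemma (in group) direct_power_coordinate:
  "v \<in> carrier (direct_power K G) \<Longrightarrow> v n \<in> carrier G"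
  by (cases "n < K") (auto simp: carrier_direct_power)

lemma (in group) group_direct_power: "group (direct_power K G)"
proof (rule groupI)
  fix v assume "v \<in> carrier (direct_power K G)"
  then show "\<exists>w\<in>carrier (direct_power K G). w \<otimes>\<^bsub>direct_power K G\<^esub> v = \<one>\<^bsub>direct_power K G\<^esub>"
    by (intro bexI[of _ "\<lambda>n. inv v n"]) (auto simp: carrier_direct_power direct_power_coordinate)
qed (auto simp: carrier_direct_power direct_power_coordinate m_assoc)

lemma (in group) inv_direct_power:
  assumes "v \<in> carrier (direct_power K G)"
  shows "inv\<^bsub>direct_power K G\<^esub> v = (\<lambda>n. inv v n)"
  by (rule group.inv_equality[OF group_direct_power])
     (use assms in \<open>auto simp: carrier_direct_power direct_power_coordinate\<close>)

lemma (in group_hom) hom_direct_power: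
  "(\<circ>) h \<in> hom (direct_power K G) (direct_power K H)"
  by (rule homI) (auto simp: carrier_direct_power G.direct_power_coordinate)

lemma short_exact_direct_power:
  assumes "short_exact A G Q i p"
  shows "short_exact (direct_power K A) (direct_power K G) (direct_power K Q) ((\<circ>) i) ((\<circ>) p)"
proof -
  interpret i: group_hom A G i
    using assms by (simp add: short_exact_def group_hom_def group_hom_axioms_def)
  interpret p: group_hom G Q p
    using assms by (simp add: short_exact_def group_hom_def group_hom_axioms_def)
  have inj: "inj_on i (carrier A)" and surj: "p ` carrier G = carrier Q"
    and ker: "i ` carrier A = {g \<in> carrier G. p g = \<one>\<^bsub>Q\<^esub>}"
    using assms by (auto simp: short_exact_def)
  have "inj_on ((\<circ>) i) (carrier (direct_power K A))"
    using inj by (intro inj_onI) (auto simp: fun_eq_iff inj_on_def i.G.direct_power_coordinate)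
  moreover have "carrier (direct_power K Q) \<subseteq> (\<circ>) p ` carrier (direct_power K G)"
  proof
    fix q assume q: "q \<in> carrier (direct_power K Q)"
    define v where "v n = (if n < K then inv_into (carrier G) p (q n) else \<one>\<^bsub>G\<^esub>)" for n
    have "v \<in> carrier (direct_power K G)"
      using q surj by (auto simp: v_def carrier_direct_power inv_into_into)
    moreover have "q = p \<circ> v"
      using q surj by (auto simp: v_def carrier_direct_power fun_eq_iff f_inv_into_f)
    ultimately show "q \<in> (\<circ>) p ` carrier (direct_power K G)" by blast
  qed
  moreover have "{g \<in> carrier (direct_power K G). p \<circ> g = \<one>\<^bsub>direct_power K Q\<^esub>}
      \<subseteq> (\<circ>) i ` carrier (direct_power K A)"
  proof safe
    fix g assume g: "g \<in> carrier (direct_power K G)" "p \<circ> g = \<one>\<^bsub>direct_power K Q\<^esub>"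
    then have g_ker: "g n \<in> i ` carrier A" if "n < K" for n
      using that ker by (auto simp: carrier_direct_power fun_eq_iff)
    define a where "a n = (if n < K then inv_into (carrier A) i (g n) else \<one>\<^bsub>A\<^esub>)" for n
    have "a \<in> carrier (direct_power K A)"
      using g_ker by (auto simp: a_def carrier_direct_power inv_into_into)
    moreover have "g = i \<circ> a"
      using g g_ker by (auto simp: a_def carrier_direct_power fun_eq_iff f_inv_into_f)
    ultimately show "g \<in> (\<circ>) i ` carrier (direct_power K A)" by blast
  qed
  moreover have "p (i a) = \<one>\<^bsub>Q\<^esub>" if "a \<in> carrier A" for a
    using that ker by blast
  ultimately show ?thesis
    unfolding short_exact_def
    by (auto simp: i.G.group_direct_power i.H.group_direct_power p.H.group_direct_power
        i.hom_direct_power p.hom_direct_power i.G.direct_power_coordinate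
        intro: hom_in_carrier[OF i.hom_direct_power] hom_in_carrier[OF p.hom_direct_power])
qed

definition direct_power_norm :: "nat \<Rightarrow> ('a \<Rightarrow> real) \<Rightarrow> (nat \<Rightarrow> 'a) \<Rightarrow> real" where
  "direct_power_norm K N v = (\<Sum>n<K. N (v n))"

abbreviation direct_power_dist ::
    "nat \<Rightarrow> ('a, 'b) monoid_scheme \<Rightarrow> ('a \<Rightarrow> real) \<Rightarrow> (nat \<Rightarrow> 'a) \<Rightarrow> (nat \<Rightarrow> 'a) \<Rightarrow> real" where
  "direct_power_dist K G N \<equiv> norm_dist (direct_power K G) (direct_power_norm K N)"

lemma (in group) proper_norm_nonneg:
  assumes "proper_norm G N" "g \<in> carrier G"
  shows "0 \<le> N g"
proof -
  have "N \<one> \<le> N (inv g) + N g"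
    using assms l_inv[of g] unfolding proper_norm_def by (metis inv_closed)
  moreover have "N \<one> = 0"
    using assms(1) unfolding proper_norm_def by blast
  ultimately show ?thesis using assms by (simp add: proper_norm_def)
qed

lemma (in group) norm_dist_self:
  "proper_norm G N \<Longrightarrow> g \<in> carrier G \<Longrightarrow> norm_dist G N g g = 0"
  by (simp add: norm_dist_def proper_norm_def)

lemma (in group) norm_dist_nonneg:
  "proper_norm G N \<Longrightarrow> g \<in> carrier G \<Longrightarrow> h \<in> carrier G \<Longrightarrow> 0 \<le> norm_dist G N g h"
  by (simp add: norm_dist_def proper_norm_nonneg)

lemma (in group) norm_dist_direct_power:
  assumes "v \<in> carrier (direct_power K G)"
  shows "direct_power_dist K G N v w = (\<Sum>n<K. norm_dist G N (v n) (w n))"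
  using assms by (simp add: norm_dist_def direct_power_norm_def inv_direct_power)

lemma (in group) proper_norm_direct_power:
  assumes N: "proper_norm G N"
  shows "proper_norm (direct_power K G) (direct_power_norm K N)"
  unfolding proper_norm_def
proof (intro conjI ballI allI)
  have N_nonneg: "\<And>v n. v \<in> carrier (direct_power K G) \<Longrightarrow> 0 \<le> N (v n)"
    using N by (simp add: proper_norm_nonneg direct_power_coordinate)
  fix v assume v: "v \<in> carrier (direct_power K G)"
  have "direct_power_norm K N v = 0 \<longleftrightarrow> (\<forall>n<K. N (v n) = 0)"
    unfolding direct_power_norm_def using N_nonneg[OF v] by (subst sum_nonneg_eq_0_iff) auto
  also have "\<dots> \<longleftrightarrow> v = \<one>\<^bsub>direct_power K G\<^esub>"
    using v N by (auto simp: proper_norm_def carrier_direct_power fun_eq_iff) (metis not_le)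
  finally show "direct_power_norm K N v = 0 \<longleftrightarrow> v = \<one>\<^bsub>direct_power K G\<^esub>" .
  show "direct_power_norm K N (inv\<^bsub>direct_power K G\<^esub> v) = direct_power_norm K N v"
    using v N by (simp add: direct_power_norm_def inv_direct_power proper_norm_def direct_power_coordinate)
  fix w assume w: "w \<in> carrier (direct_power K G)"
  show "direct_power_norm K N (v \<otimes>\<^bsub>direct_power K G\<^esub> w) \<le> direct_power_norm K N v + direct_power_norm K N w"
    unfolding direct_power_norm_def sum.distrib[symmetric]
    using v w N by (intro sum_mono) (simp add: proper_norm_def direct_power_coordinate)
next
  fix r :: real
  let ?B = "{g \<in> carrier G. N g \<le> r}"
  have N_le_norm: "N (v n) \<le> direct_power_norm K N v"
    if "v \<in> carrier (direct_power K G)" "n < K" for v n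
    unfolding direct_power_norm_def using that N
    by (intro member_le_sum) (auto simp: proper_norm_nonneg direct_power_coordinate)
  have "{v \<in> carrier (direct_power K G). direct_power_norm K N v \<le> r}
      \<subseteq> {v. \<forall>n. (n \<in> {..<K} \<longrightarrow> v n \<in> ?B) \<and> (n \<notin> {..<K} \<longrightarrow> v n = \<one>)}"
  proof (rule subsetI, rule CollectI, intro allI conjI impI)
    fix v n assume v: "v \<in> {v \<in> carrier (direct_power K G). direct_power_norm K N v \<le> r}"
    show "v n \<in> ?B" if "n \<in> {..<K}"
      using v that N_le_norm[of v n] direct_power_coordinate[of v] by auto
    show "v n = \<one>" if "n \<notin> {..<K}"
      using v that by (simp add: carrier_direct_power)
  qed
  moreover have "finite ?B" using N by (simp add: proper_norm_def)
  ultimately show "finite {v \<in> carrier (direct_power K G). direct_power_norm K N v \<le> r}"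
    using finite_set_of_finite_funs[of "{..<K}" ?B \<one>] by (blast intro: finite_subset)
qed

lemma coarse_map_affine_bound:
  assumes "\<forall>x\<in>X. f x \<in> Y" "\<forall>x\<in>X. \<forall>x'\<in>X. dY (f x) (f x') \<le> c * dX x x' + b" "0 \<le> c"
  shows "coarse_map X dX Y dY f"
  unfolding coarse_map_def
proof (intro conjI allI)
  fix \<delta>
  have "dY (f x) (f x') \<le> c * \<delta> + b" if "x \<in> X" "x' \<in> X" "dX x x' \<le> \<delta>" for x x'
    using assms that mult_left_mono[of "dX x x'" \<delta> c] by fastforce
  then show "\<exists>\<epsilon>. \<forall>x\<in>X. \<forall>x'\<in>X. dX x x' \<le> \<delta> \<longrightarrow> dY (f x) (f x') \<le> \<epsilon>" by blast
qed (use assms in blast)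

lemma coarse_map_coordinatewise:
  fixes K :: nat
  assumes f: "coarse_map X dX Y dY f"
    and dX_nonneg: "\<forall>x\<in>X. \<forall>x'\<in>X. 0 \<le> dX x x'"
    and F: "\<forall>v\<in>V. F v \<in> W \<and> (\<forall>n<K. \<pi> n v \<in> X \<and> \<rho> n (F v) = f (\<pi> n v))"
    and dV: "\<forall>v\<in>V. \<forall>v'\<in>V. dV v v' = (\<Sum>n<K. dX (\<pi> n v) (\<pi> n v'))"
    and dW: "\<forall>w\<in>W. \<forall>w'\<in>W. dW w w' = (\<Sum>n<K. dY (\<rho> n w) (\<rho> n w'))"
  shows "coarse_map V dV W dW F"
  unfolding coarse_map_def
proof (intro conjI ballI allI)
  fix \<delta> :: real
  obtain \<epsilon> where \<epsilon>: "\<forall>x\<in>X. \<forall>x'\<in>X. dX x x' \<le> \<delta> \<longrightarrow> dY (f x) (f x') \<le> \<epsilon>"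
    using f unfolding coarse_map_def by blast
  have "dW (F v) (F v') \<le> real K * \<epsilon>" if "v \<in> V" "v' \<in> V" "dV v v' \<le> \<delta>" for v v'
  proof -
    have "dX (\<pi> n v) (\<pi> n v') \<le> \<delta>" if "n < K" for n
    proof -
      have "dX (\<pi> n v) (\<pi> n v') \<le> (\<Sum>m<K. dX (\<pi> m v) (\<pi> m v'))"
        using \<open>n < K\<close> \<open>v \<in> V\<close> \<open>v' \<in> V\<close> F dX_nonneg by (intro member_le_sum) auto
      then show ?thesis using \<open>v \<in> V\<close> \<open>v' \<in> V\<close> \<open>dV v v' \<le> \<delta>\<close> dV by auto
    qed
    then have "(\<Sum>n<K. dY (f (\<pi> n v)) (f (\<pi> n v'))) \<le> real K * \<epsilon>"
      using sum_bounded_above[of "{..<K}" "\<lambda>n. dY (f (\<pi> n v)) (f (\<pi> n v'))" \<epsilon>]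
        \<epsilon> F \<open>v \<in> V\<close> \<open>v' \<in> V\<close> by auto
    then show ?thesis using F dW \<open>v \<in> V\<close> \<open>v' \<in> V\<close> by auto
  qed
  then show "\<exists>\<epsilon>. \<forall>v\<in>V. \<forall>v'\<in>V. dV v v' \<le> \<delta> \<longrightarrow> dW (F v) (F v') \<le> \<epsilon>" by blast
qed (use F in blast)

lemma coarse_equivalence_coordinatewise:
  fixes K :: nat
  assumes f: "coarse_map X dX Y dY f" and g: "coarse_map Y dY X dX g"
    and gf: "\<forall>x\<in>X. dX (g (f x)) x \<le> C" and fg: "\<forall>y\<in>Y. dY (f (g y)) y \<le> C"
    and dX_nonneg: "\<forall>x\<in>X. \<forall>x'\<in>X. 0 \<le> dX x x'" and dY_nonneg: "\<forall>y\<in>Y. \<forall>y'\<in>Y. 0 \<le> dY y y'"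
    and F: "\<forall>v\<in>V. F v \<in> W \<and> (\<forall>n<K. \<pi> n v \<in> X \<and> \<rho> n (F v) = f (\<pi> n v))"
    and G: "\<forall>w\<in>W. G w \<in> V \<and> (\<forall>n<K. \<rho> n w \<in> Y \<and> \<pi> n (G w) = g (\<rho> n w))"
    and dV: "\<forall>v\<in>V. \<forall>v'\<in>V. dV v v' = (\<Sum>n<K. dX (\<pi> n v) (\<pi> n v'))"
    and dW: "\<forall>w\<in>W. \<forall>w'\<in>W. dW w w' = (\<Sum>n<K. dY (\<rho> n w) (\<rho> n w'))"
  shows "coarse_equivalence V dV W dW F"
  unfolding coarse_equivalence_def
proof (intro conjI exI ballI)
  show "coarse_map V dV W dW F"
    using f dX_nonneg F dV dW by (rule coarse_map_coordinatewise)
  show "coarse_map W dW V dV G"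
    using g dY_nonneg G dW dV by (rule coarse_map_coordinatewise)
  fix v assume "v \<in> V"
  then have "dV (G (F v)) v = (\<Sum>n<K. dX (g (f (\<pi> n v))) (\<pi> n v))"
    using F G dV by simp
  also have "\<dots> \<le> real K * C"
    using sum_bounded_above[of "{..<K}" _ C] gf F \<open>v \<in> V\<close> by simp
  finally show "dV (G (F v)) v \<le> real K * C" .
next
  fix w assume "w \<in> W"
  then have "dW (F (G w)) w = (\<Sum>n<K. dY (f (g (\<rho> n w))) (\<rho> n w))"
    using F G dW by simp
  also have "\<dots> \<le> real K * C"
    using sum_bounded_above[of "{..<K}" _ C] fg G \<open>w \<in> W\<close> by simp
  finally show "dW (F (G w)) w \<le> real K * C" .
qed

section \<open>Coarse splitting of direct powers\<close>

definition l1_dist :: "('a \<Rightarrow> 'a \<Rightarrow> real) \<Rightarrow> ('b \<Rightarrow> 'b \<Rightarrow> real) \<Rightarrow> 'a \<times> 'b \<Rightarrow> 'a \<times> 'b \<Rightarrow> real" where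
  "l1_dist dX dY u u' = dX (fst u) (fst u') + dY (snd u) (snd u')"

lemma l1_dist_Pair [simp]: "l1_dist dX dY (x, y) (x', y') = dX x x' + dY y y'"
  by (simp add: l1_dist_def)

lemma coarsely_split_iff:
  "coarsely_split A G Q i p \<longleftrightarrow> short_exact A G Q i p \<and>
     (\<exists>NA NG NQ f. proper_norm A NA \<and> proper_norm G NG \<and> proper_norm Q NQ \<and>
        coarse_equivalence (carrier G) (norm_dist G NG)
          (carrier A \<times> carrier Q) (l1_dist (norm_dist A NA) (norm_dist Q NQ)) f \<and>
        (\<exists>C. \<forall>a\<in>carrier A. l1_dist (norm_dist A NA) (norm_dist Q NQ) (f (i a)) (a, \<one>\<^bsub>Q\<^esub>) \<le> C) \<and>
        (\<exists>C. \<forall>g\<in>carrier G. norm_dist Q NQ (snd (f g)) (p g) \<le> C))"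
  unfolding coarsely_split_def l1_dist_def Let_def case_prod_beta ..

lemma l1_dist_direct_power:
  assumes "group A" "group Q" "u \<in> carrier (direct_power K A) \<times> carrier (direct_power K Q)"
  shows "l1_dist (direct_power_dist K A NA) (direct_power_dist K Q NQ) u u'
       = (\<Sum>n<K. l1_dist (norm_dist A NA) (norm_dist Q NQ) (fst u n, snd u n) (fst u' n, snd u' n))"
  using assms by (simp add: l1_dist_def group.norm_dist_direct_power mem_Times_iff sum.distrib)

lemma coarse_equivalence_direct_power:
  assumes A: "group A" "proper_norm A NA" and G: "group G" "proper_norm G NG"
    and Q: "group Q" "proper_norm Q NQ"
    and f: "coarse_equivalence (carrier G) (norm_dist G NG)
              (carrier A \<times> carrier Q) (l1_dist (norm_dist A NA) (norm_dist Q NQ)) f"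
  obtains F where "coarse_equivalence (carrier (direct_power K G))
      (direct_power_dist K G NG) (carrier (direct_power K A) \<times> carrier (direct_power K Q))
      (l1_dist (direct_power_dist K A NA) (direct_power_dist K Q NQ)) F"
    and "\<And>v n. n < K \<Longrightarrow> (fst (F v) n, snd (F v) n) = f (v n)"
proof -
  define dS where "dS = l1_dist (norm_dist A NA) (norm_dist Q NQ)"
  obtain g C where f_map: "coarse_map (carrier G) (norm_dist G NG) (carrier A \<times> carrier Q) dS f"
    and g_map: "coarse_map (carrier A \<times> carrier Q) dS (carrier G) (norm_dist G NG) g"
    and gf: "\<forall>x\<in>carrier G. norm_dist G NG (g (f x)) x \<le> C"
    and fg: "\<forall>y\<in>carrier A \<times> carrier Q. dS (f (g y)) y \<le> C"
    using f unfolding coarse_equivalence_def dS_def by blast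
  have f_in: "f x \<in> carrier A \<times> carrier Q" if "x \<in> carrier G" for x
    using f_map that unfolding coarse_map_def by blast
  have g_in: "g y \<in> carrier G" if "y \<in> carrier A \<times> carrier Q" for y
    using g_map that unfolding coarse_map_def by blast
  \<comment> \<open>\<open>f\<close> need not send \<open>\<one>\<close> to \<open>(\<one>, \<one>)\<close>, so the coordinates from K on are reset explicitly.\<close>
  define F where "F v = ((\<lambda>n. if n < K then fst (f (v n)) else \<one>\<^bsub>A\<^esub>),
                          (\<lambda>n. if n < K then snd (f (v n)) else \<one>\<^bsub>Q\<^esub>))" for v
  define H where "H w = (\<lambda>n. if n < K then g (fst w n, snd w n) else \<one>\<^bsub>G\<^esub>)" for w
  show thesis
  proof (rule that[of F])
    show "coarse_equivalence (carrier (direct_power K G))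
      (direct_power_dist K G NG) (carrier (direct_power K A) \<times> carrier (direct_power K Q))
      (l1_dist (direct_power_dist K A NA) (direct_power_dist K Q NQ)) F"
    proof (rule coarse_equivalence_coordinatewise[OF f_map g_map gf fg, where G = H
          and \<pi> = "\<lambda>n v. v n" and \<rho> = "\<lambda>n w. (fst w n, snd w n)"])
      show "\<forall>x\<in>carrier G. \<forall>x'\<in>carrier G. 0 \<le> norm_dist G NG x x'"
        using G by (simp add: group.norm_dist_nonneg)
      show "\<forall>y\<in>carrier A \<times> carrier Q. \<forall>y'\<in>carrier A \<times> carrier Q. 0 \<le> dS y y'"
        using A Q by (auto simp: dS_def group.norm_dist_nonneg)
    qed (use A G Q f_in g_in in \<open>auto simp: F_def H_def dS_def carrier_direct_power mem_Times_iff
        group.direct_power_coordinate group.norm_dist_direct_power l1_dist_direct_power\<close>)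
  qed (simp add: F_def)
qed

lemma coarsely_split_direct_power:
  assumes "coarsely_split A G Q i p"
  shows "coarsely_split (direct_power K A) (direct_power K G) (direct_power K Q) ((\<circ>) i) ((\<circ>) p)"
proof -
  obtain NA NG NQ f C1 C2 where exact: "short_exact A G Q i p"
    and NA: "proper_norm A NA" and NG: "proper_norm G NG" and NQ: "proper_norm Q NQ"
    and f: "coarse_equivalence (carrier G) (norm_dist G NG)
              (carrier A \<times> carrier Q) (l1_dist (norm_dist A NA) (norm_dist Q NQ)) f"
    and C1: "\<forall>a\<in>carrier A. l1_dist (norm_dist A NA) (norm_dist Q NQ) (f (i a)) (a, \<one>\<^bsub>Q\<^esub>) \<le> C1"
    and C2: "\<forall>x\<in>carrier G. norm_dist Q NQ (snd (f x)) (p x) \<le> C2"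
    using assms unfolding coarsely_split_iff by blast
  interpret i: group_hom A G i
    using exact by (simp add: short_exact_def group_hom_def group_hom_axioms_def)
  interpret p: group_hom G Q p
    using exact by (simp add: short_exact_def group_hom_def group_hom_axioms_def)
  obtain F where F: "coarse_equivalence (carrier (direct_power K G))
      (direct_power_dist K G NG) (carrier (direct_power K A) \<times> carrier (direct_power K Q))
      (l1_dist (direct_power_dist K A NA) (direct_power_dist K Q NQ)) F"
    and F_coord: "\<And>v n. n < K \<Longrightarrow> (fst (F v) n, snd (F v) n) = f (v n)"
    using coarse_equivalence_direct_power[OF i.G.is_group NA i.H.is_group NG p.H.is_group NQ f, of K]
    by blast
  have F_in: "F v \<in> carrier (direct_power K A) \<times> carrier (direct_power K Q)"
    if "v \<in> carrier (direct_power K G)" for v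
    using F that by (simp add: coarse_equivalence_def coarse_map_def)
  have "l1_dist (direct_power_dist K A NA) (direct_power_dist K Q NQ)
          (F (i \<circ> a)) (a, \<one>\<^bsub>direct_power K Q\<^esub>) \<le> real K * C1" if a: "a \<in> carrier (direct_power K A)" for a
  proof -
    have "i \<circ> a \<in> carrier (direct_power K G)"
      using a by (rule hom_in_carrier[OF i.hom_direct_power])
    then have "l1_dist (direct_power_dist K A NA) (direct_power_dist K Q NQ)
          (F (i \<circ> a)) (a, \<one>\<^bsub>direct_power K Q\<^esub>)
        = (\<Sum>n<K. l1_dist (norm_dist A NA) (norm_dist Q NQ) (f (i (a n))) (a n, \<one>\<^bsub>Q\<^esub>))"
      by (simp add: l1_dist_direct_power F_in F_coord)
    also have "\<dots> \<le> real K * C1"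
      using sum_bounded_above[of "{..<K}" _ C1] C1 a by (simp add: i.G.direct_power_coordinate)
    finally show ?thesis .
  qed
  moreover have "direct_power_dist K Q NQ (snd (F v)) (p \<circ> v) \<le> real K * C2"
    if v: "v \<in> carrier (direct_power K G)" for v
  proof -
    have "direct_power_dist K Q NQ (snd (F v)) (p \<circ> v)
        = (\<Sum>n<K. norm_dist Q NQ (snd (f (v n))) (p (v n)))"
      using F_in[OF v] F_coord[of _ v, THEN arg_cong[where f = snd]]
      by (simp add: p.H.norm_dist_direct_power mem_Times_iff)
    also have "\<dots> \<le> real K * C2"
      using sum_bounded_above[of "{..<K}" _ C2] C2 v by (simp add: i.H.direct_power_coordinate)
    finally show ?thesis .
  qed
  ultimately show ?thesis
    unfolding coarsely_split_iff
    using short_exact_direct_power[OF exact] i.G.proper_norm_direct_power[OF NA]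
      i.H.proper_norm_direct_power[OF NG] p.H.proper_norm_direct_power[OF NQ] F by blast
qed

section \<open>Denominators of rationals\<close>

definition rat_denom :: "rat \<Rightarrow> int" where
  "rat_denom x = snd (quotient_of x)"

lemma rat_denom_pos: "0 < rat_denom x"
  by (simp add: rat_denom_def quotient_of_denom_pos')

lemma rat_denom_dvd_iff: "rat_denom x dvd d \<longleftrightarrow> of_int d * x \<in> \<int>"
proof -
  obtain a b where q: "quotient_of x = (a, b)" by (cases "quotient_of x")
  have x: "x = of_int a / of_int b" and b: "0 < b" and coprime: "coprime a b"
    using q by (auto intro: quotient_of_div quotient_of_denom_pos quotient_of_coprime)
  have "b dvd d \<longleftrightarrow> of_int d * x \<in> \<int>"
  proof
    assume "b dvd d"
    then obtain k where "d = b * k" by blast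
    then have "of_int d * x = of_int (k * a)" using x b by simp
    then show "of_int d * x \<in> \<int>" by simp
  next
    assume "of_int d * x \<in> \<int>"
    then obtain n where "of_int d * x = of_int n" by (elim Ints_cases)
    then have "d * a = n * b" using x b by (simp add: field_simps flip: of_int_mult)
    then have "b dvd d * a" by (metis dvd_triv_right)
    then show "b dvd d" using coprime by (simp add: coprime_commute coprime_dvd_mult_left_iff)
  qed
  then show ?thesis by (simp add: rat_denom_def q)
qed

lemma rat_denom_cong:
  assumes "\<And>d. of_int d * x \<in> \<int> \<longleftrightarrow> of_int d * y \<in> \<int>"
  shows "rat_denom x = rat_denom y"
proof -
  have "rat_denom x dvd d \<longleftrightarrow> rat_denom y dvd d" for d
    using assms by (simp add: rat_denom_dvd_iff)
  then show ?thesis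
    using rat_denom_pos[of x] rat_denom_pos[of y] by (metis dvd_refl zdvd_antisym_nonneg less_imp_le)
qed

lemma rat_denom_add_Ints: "m \<in> \<int> \<Longrightarrow> rat_denom (x + m) = rat_denom x"
  by (rule rat_denom_cong) (simp add: distrib_left)

lemma rat_denom_uminus: "rat_denom (- x) = rat_denom x"
  by (rule rat_denom_cong) simp

lemma rat_denom_add_dvd: "rat_denom (x + y) dvd rat_denom x * rat_denom y"
proof -
  have "of_int (rat_denom x) * x \<in> \<int>" "of_int (rat_denom y) * y \<in> \<int>"
    by (simp_all flip: rat_denom_dvd_iff)
  then have "of_int (rat_denom y) * (of_int (rat_denom x) * x)
      + of_int (rat_denom x) * (of_int (rat_denom y) * y) \<in> \<int>"
    by (metis Ints_add Ints_mult Ints_of_int)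
  then show ?thesis by (simp add: rat_denom_dvd_iff algebra_simps)
qed

lemma rat_denom_eq_1_iff: "rat_denom x = 1 \<longleftrightarrow> x \<in> \<int>"
  using rat_denom_dvd_iff[of x 1] rat_denom_pos[of x] by (auto simp: zdvd1_eq)

lemma finite_rat_denom_bounded:
  "finite {x::rat. real_of_int (rat_denom x) \<le> B \<and> \<bar>real_of_rat x\<bar> \<le> C}" (is "finite ?S")
proof -
  define M where "M = max \<lceil>B\<rceil> \<lceil>B * C\<rceil>"
  have "?S \<subseteq> quotient_of -` ({-M..M} \<times> {-M..M})"
  proof
    fix x assume x: "x \<in> ?S"
    obtain a b where q: "quotient_of x = (a, b)" by (cases "quotient_of x")
    have b: "b = rat_denom x" "0 < b" using q rat_denom_pos[of x] by (simp_all add: rat_denom_def)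
    have "rat_of_int a = rat_of_int b * x"
      using quotient_of_div[OF q] b by (simp add: field_simps)
    then have "real_of_int a = real_of_int b * real_of_rat x"
      by (metis of_rat_mult of_rat_of_int_eq)
    then have "\<bar>real_of_int a\<bar> \<le> B * C"
      using x b by (auto simp: abs_mult intro: mult_mono)
    then show "x \<in> quotient_of -` ({-M..M} \<times> {-M..M})"
      using x b q unfolding M_def by auto linarith+
  qed
  moreover have "inj quotient_of" by (simp add: inj_on_def quotient_of_inject_eq)
  ultimately show ?thesis
    by (meson finite_subset finite_vimageI finite_SigmaI finite_atLeastAtMost_int)
qed

definition log_denom :: "rat \<Rightarrow> real" where
  "log_denom x = ln (real_of_int (rat_denom x))"

lemma log_denom_nonneg: "0 \<le> log_denom x"
  using rat_denom_pos[of x] by (simp add: log_denom_def)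

lemma log_denom_eq_0_iff: "log_denom x = 0 \<longleftrightarrow> x \<in> \<int>"
  using rat_denom_pos[of x] by (simp add: log_denom_def ln_eq_zero_iff rat_denom_eq_1_iff)

lemma log_denom_0 [simp]: "log_denom 0 = 0"
  by (simp add: log_denom_eq_0_iff)

lemma log_denom_add_le: "log_denom (x + y) \<le> log_denom x + log_denom y"
proof -
  have "rat_denom (x + y) \<le> rat_denom x * rat_denom y"
    using rat_denom_add_dvd rat_denom_pos by (intro zdvd_imp_le) (auto simp: mult_pos_pos)
  then have "real_of_int (rat_denom (x + y)) \<le> real_of_int (rat_denom x) * real_of_int (rat_denom y)"
    by (simp flip: of_int_mult)
  then have "ln (real_of_int (rat_denom (x + y)))
      \<le> ln (real_of_int (rat_denom x) * real_of_int (rat_denom y))"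
    using rat_denom_pos[of "x + y"] by simp
  then show ?thesis
    using rat_denom_pos[of x] rat_denom_pos[of y] by (simp add: log_denom_def ln_mult)
qed

lemma log_denom_add_Ints: "m \<in> \<int> \<Longrightarrow> log_denom (x + m) = log_denom x"
  by (simp add: log_denom_def rat_denom_add_Ints)

lemma log_denom_uminus [simp]: "log_denom (- x) = log_denom x"
  by (simp add: log_denom_def rat_denom_uminus)

lemma log_denom_frac [simp]: "log_denom (frac x) = log_denom x"
  unfolding frac_def using log_denom_add_Ints[of "- of_int \<lfloor>x\<rfloor>" x] by simp

lemma log_denom_le_imp_rat_denom_le: "log_denom x \<le> r \<Longrightarrow> real_of_int (rat_denom x) \<le> exp r"
  unfolding log_denom_def by (metis exp_le_cancel_iff exp_ln of_int_0_less_iff rat_denom_pos)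

section \<open>The sequence \<open>0 \<rightarrow> \<int> \<rightarrow> \<int>[1/2] \<rightarrow> \<int>(2\<^sup>\<infinity>) \<rightarrow> 0\<close>\<close>

lemma dyadic_add: "dyadic x \<Longrightarrow> dyadic y \<Longrightarrow> dyadic (x + y)"
proof -
  assume "dyadic x" "dyadic y"
  then obtain m k m' k' where xy: "x = of_int m / 2 ^ k" "y = of_int m' / 2 ^ k'"
    unfolding dyadic_def by blast
  have "x + y = of_int (m * 2 ^ k' + m' * 2 ^ k) / 2 ^ (k + k')"
    unfolding xy by (simp add: add_divide_distrib power_add)
  then show "dyadic (x + y)" unfolding dyadic_def by blast
qed

lemma dyadic_uminus: "dyadic x \<Longrightarrow> dyadic (- x)"
  unfolding dyadic_def by (metis minus_divide_left of_int_minus)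

lemma dyadic_of_int: "dyadic (of_int m)"
  unfolding dyadic_def by (metis div_by_1 power_0)

lemma dyadic_0 [simp]: "dyadic 0"
  using dyadic_of_int[of 0] by simp

lemma dyadic_frac: "dyadic x \<Longrightarrow> dyadic (frac x)"
  unfolding frac_def by (metis diff_conv_add_uminus dyadic_add dyadic_of_int dyadic_uminus)

definition dyadic_group :: "rat monoid" where
  "dyadic_group = \<lparr>carrier = {x. dyadic x}, monoid.mult = (+), one = 0\<rparr>"

definition pruefer_group :: "rat monoid" where
  "pruefer_group = \<lparr>carrier = {x. dyadic x \<and> 0 \<le> x \<and> x < 1}, monoid.mult = (\<lambda>x y. frac (x + y)), one = 0\<rparr>"

lemma dyadic_group_simps [simp]:
  "carrier dyadic_group = {x. dyadic x}" "x \<otimes>\<^bsub>dyadic_group\<^esub> y = x + y" "\<one>\<^bsub>dyadic_group\<^esub> = 0"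
  by (simp_all add: dyadic_group_def)

lemma pruefer_group_simps [simp]:
  "carrier pruefer_group = {x. dyadic x \<and> 0 \<le> x \<and> x < 1}"
  "x \<otimes>\<^bsub>pruefer_group\<^esub> y = frac (x + y)" "\<one>\<^bsub>pruefer_group\<^esub> = 0"
  by (simp_all add: pruefer_group_def)

lemma group_dyadic_group: "group dyadic_group"
  by (rule groupI)
     (auto simp: dyadic_add intro: dyadic_uminus)

lemma inv_dyadic_group: "dyadic x \<Longrightarrow> inv\<^bsub>dyadic_group\<^esub> x = - x"
  by (rule group.inv_equality[OF group_dyadic_group]) (auto simp: dyadic_uminus)

lemma group_pruefer_group: "group pruefer_group"
proof (rule groupI)
  fix x assume "x \<in> carrier pruefer_group"
  then show "\<exists>y\<in>carrier pruefer_group. y \<otimes>\<^bsub>pruefer_group\<^esub> x = \<one>\<^bsub>pruefer_group\<^esub>"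
    by (intro bexI[of _ "frac (- x)"])
       (auto simp: dyadic_frac dyadic_uminus frac_lt_1)
qed (auto simp: dyadic_frac dyadic_add
    frac_lt_1 add.assoc)

lemma inv_pruefer_group:
  "x \<in> carrier pruefer_group \<Longrightarrow> inv\<^bsub>pruefer_group\<^esub> x = frac (- x)"
  by (rule group.inv_equality[OF group_pruefer_group])
     (auto simp: dyadic_frac dyadic_uminus frac_lt_1)

lemma short_exact_dyadic: "short_exact integer_group dyadic_group pruefer_group of_int frac"
  unfolding short_exact_def
proof (intro conjI)
  show "of_int \<in> hom integer_group dyadic_group"
    by (rule homI) (auto simp: dyadic_of_int)
  show "frac \<in> hom dyadic_group pruefer_group"
    by (rule homI) (auto simp: dyadic_frac frac_lt_1)
  show "frac ` carrier dyadic_group = carrier pruefer_group"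
  proof
    show "carrier pruefer_group \<subseteq> frac ` carrier dyadic_group"
    proof
      fix x assume "x \<in> carrier pruefer_group"
      then show "x \<in> frac ` carrier dyadic_group"
        by (intro image_eqI[of x frac x]) (simp_all add: frac_eq)
    qed
  qed (auto simp: dyadic_frac frac_lt_1)
  show "of_int ` carrier integer_group = {x \<in> carrier dyadic_group. frac x = \<one>\<^bsub>pruefer_group\<^esub>}"
    by (auto simp: dyadic_of_int elim: Ints_cases)
qed (simp_all add: group_dyadic_group group_pruefer_group inj_on_def)

definition dyadic_norm :: "rat \<Rightarrow> real" where
  "dyadic_norm x = \<bar>real_of_rat x\<bar> + log_denom x"

lemma proper_norm_integer_group: "proper_norm integer_group (\<lambda>a. \<bar>real_of_int a\<bar>)"
  unfolding proper_norm_def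
proof (intro conjI ballI allI)
  fix r :: real
  have "{a. \<bar>real_of_int a\<bar> \<le> r} \<subseteq> {-\<lceil>r\<rceil>..\<lceil>r\<rceil>}" by auto linarith+
  then show "finite {a \<in> carrier integer_group. \<bar>real_of_int a\<bar> \<le> r}"
    by (auto intro: finite_subset)
qed (simp_all add: abs_triangle_ineq)

lemma proper_norm_dyadic_group: "proper_norm dyadic_group dyadic_norm"
  unfolding proper_norm_def
proof (intro conjI ballI allI)
  fix x assume x: "x \<in> carrier dyadic_group"
  have "dyadic_norm x = 0 \<longleftrightarrow> \<bar>real_of_rat x\<bar> = 0 \<and> log_denom x = 0"
    using log_denom_nonneg[of x] abs_ge_zero[of "real_of_rat x"] unfolding dyadic_norm_def by linarith
  then show "dyadic_norm x = 0 \<longleftrightarrow> x = \<one>\<^bsub>dyadic_group\<^esub>"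
    by (auto simp: log_denom_eq_0_iff)
  show "dyadic_norm (inv\<^bsub>dyadic_group\<^esub> x) = dyadic_norm x"
    using x by (simp add: inv_dyadic_group dyadic_norm_def)
  fix y
  have "\<bar>real_of_rat (x + y)\<bar> \<le> \<bar>real_of_rat x\<bar> + \<bar>real_of_rat y\<bar>"
    by (metis abs_triangle_ineq of_rat_add)
  then show "dyadic_norm (x \<otimes>\<^bsub>dyadic_group\<^esub> y) \<le> dyadic_norm x + dyadic_norm y"
    using log_denom_add_le[of x y] by (simp add: dyadic_norm_def)
next
  fix r :: real
  have "{x \<in> carrier dyadic_group. dyadic_norm x \<le> r}
      \<subseteq> {x. real_of_int (rat_denom x) \<le> exp r \<and> \<bar>real_of_rat x\<bar> \<le> r}"
  proof (intro subsetI CollectI conjI)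
    fix x assume "x \<in> {x \<in> carrier dyadic_group. dyadic_norm x \<le> r}"
    then have "dyadic_norm x \<le> r" by simp
    then have "log_denom x \<le> r" "\<bar>real_of_rat x\<bar> \<le> r"
      using log_denom_nonneg[of x] abs_ge_zero[of "real_of_rat x"] unfolding dyadic_norm_def
      by linarith+
    then show "real_of_int (rat_denom x) \<le> exp r" "\<bar>real_of_rat x\<bar> \<le> r"
      by (simp_all add: log_denom_le_imp_rat_denom_le)
  qed
  then show "finite {x \<in> carrier dyadic_group. dyadic_norm x \<le> r}"
    using finite_rat_denom_bounded by (rule finite_subset)
qed

lemma proper_norm_pruefer_group: "proper_norm pruefer_group log_denom"
  unfolding proper_norm_def
proof (intro conjI ballI allI)
  fix x assume x: "x \<in> carrier pruefer_group"
  then show "log_denom x = 0 \<longleftrightarrow> x = \<one>\<^bsub>pruefer_group\<^esub>"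
    by (auto simp: log_denom_eq_0_iff Ints_nonzero_abs_less1)
  show "log_denom (inv\<^bsub>pruefer_group\<^esub> x) = log_denom x"
    using x by (simp add: inv_pruefer_group)
  fix y
  show "log_denom (x \<otimes>\<^bsub>pruefer_group\<^esub> y) \<le> log_denom x + log_denom y"
    by (simp add: log_denom_add_le)
next
  fix r :: real
  have "{x \<in> carrier pruefer_group. log_denom x \<le> r}
      \<subseteq> {x. real_of_int (rat_denom x) \<le> exp r \<and> \<bar>real_of_rat x\<bar> \<le> 1}"
    by (auto simp: log_denom_le_imp_rat_denom_le)
  then show "finite {x \<in> carrier pruefer_group. log_denom x \<le> r}"
    using finite_rat_denom_bounded by (rule finite_subset)
qed

lemma norm_dist_integer_group:
  "norm_dist integer_group (\<lambda>a. \<bar>real_of_int a\<bar>) a b = \<bar>real_of_int (b - a)\<bar>"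
  by (simp add: norm_dist_def)

lemma norm_dist_dyadic_group:
  "dyadic x \<Longrightarrow> norm_dist dyadic_group dyadic_norm x y = dyadic_norm (y - x)"
  by (simp add: norm_dist_def inv_dyadic_group)

lemma norm_dist_pruefer_group:
  "x \<in> carrier pruefer_group \<Longrightarrow> norm_dist pruefer_group log_denom x y = log_denom (y - x)"
  by (simp add: norm_dist_def inv_pruefer_group)

lemma abs_floor_diff_le: "\<bar>of_int (\<lfloor>y\<rfloor> - \<lfloor>x\<rfloor>)\<bar> \<le> \<bar>y - x\<bar> + (1 :: 'a :: floor_ceiling)"
  using of_int_floor_le[of x] of_int_floor_le[of y] floor_correct[of x] floor_correct[of y]
  by (simp add: abs_le_iff) linarith

lemma floor_frac_dist_le:
  "\<bar>real_of_int (\<lfloor>y\<rfloor> - \<lfloor>x\<rfloor>)\<bar> + log_denom (frac y - frac x) \<le> 2 * dyadic_norm (y - x) + 1"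
proof -
  have "\<bar>real_of_int (\<lfloor>y\<rfloor> - \<lfloor>x\<rfloor>)\<bar> \<le> \<bar>real_of_rat (y - x)\<bar> + 1"
    using abs_floor_diff_le[of "real_of_rat y" "real_of_rat x"] by (simp add: of_rat_diff)
  moreover have "frac y - frac x = (y - x) + of_int (\<lfloor>x\<rfloor> - \<lfloor>y\<rfloor>)"
    by (simp add: frac_def)
  then have "log_denom (frac y - frac x) = log_denom (y - x)"
    by (simp add: log_denom_add_Ints)
  ultimately show ?thesis
    using log_denom_nonneg[of "y - x"] abs_ge_zero[of "real_of_rat (y - x)"]
    unfolding dyadic_norm_def by argo
qed

lemma dyadic_norm_int_plus_fraction_le:
  fixes q q' :: rat
  assumes "0 \<le> q" "q < 1" "0 \<le> q'" "q' < 1"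
  shows "dyadic_norm ((of_int a' + q') - (of_int a + q)) \<le> \<bar>real_of_int (a' - a)\<bar> + log_denom (q' - q) + 1"
proof -
  have split: "(of_int a' + q') - (of_int a + q) = (q' - q) + of_int (a' - a)" by simp
  have "0 \<le> real_of_rat q" "real_of_rat q < 1" "0 \<le> real_of_rat q'" "real_of_rat q' < 1"
    using assms by simp_all
  then have "\<bar>real_of_rat (q' - q)\<bar> < 1"
    unfolding of_rat_diff abs_less_iff by linarith
  then have "\<bar>real_of_rat ((q' - q) + of_int (a' - a))\<bar> \<le> \<bar>real_of_int (a' - a)\<bar> + 1"
    using abs_triangle_ineq[of "real_of_rat (q' - q)" "real_of_int (a' - a)"]
    unfolding of_rat_add of_rat_of_int_eq by linarith
  then show ?thesis
    unfolding dyadic_norm_def split by (simp add: log_denom_add_Ints)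
qed

lemma coarse_equivalence_floor_frac:
  "coarse_equivalence (carrier dyadic_group) (norm_dist dyadic_group dyadic_norm)
     (carrier integer_group \<times> carrier pruefer_group)
     (l1_dist (norm_dist integer_group (\<lambda>a. \<bar>real_of_int a\<bar>)) (norm_dist pruefer_group log_denom))
     (\<lambda>x. (\<lfloor>x\<rfloor>, frac x))"
  (is "coarse_equivalence ?D ?dD ?S ?dS ?f")
proof -
  define g where "g w = of_int (fst w) + snd w" for w :: "int \<times> rat"
  have f_in: "\<forall>x\<in>?D. ?f x \<in> ?S"
    by (auto simp: dyadic_frac frac_lt_1)
  have g_in: "\<forall>w\<in>?S. g w \<in> ?D"
    by (auto simp: g_def dyadic_add dyadic_of_int)
  have "coarse_map ?D ?dD ?S ?dS ?f"
    using f_in floor_frac_dist_le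
    by (intro coarse_map_affine_bound[where c = 2 and b = 1])
       (auto simp: norm_dist_integer_group norm_dist_dyadic_group norm_dist_pruefer_group
         dyadic_frac frac_lt_1)
  moreover have "coarse_map ?S ?dS ?D ?dD g"
    using g_in dyadic_norm_int_plus_fraction_le
    by (intro coarse_map_affine_bound[where c = 1 and b = 1])
       (auto simp: g_def norm_dist_integer_group norm_dist_dyadic_group norm_dist_pruefer_group
         dyadic_add dyadic_of_int)
  moreover have "?dD (g (?f x)) x = 0" if "x \<in> ?D" for x
    using that group.norm_dist_self[OF group_dyadic_group proper_norm_dyadic_group]
    by (simp add: g_def frac_def)
  moreover have "?dS (?f (g (a, q))) (a, q) = 0" if "(a, q) \<in> ?S" for a q
  proof -
    have "\<lfloor>q\<rfloor> = 0" using that by (simp add: floor_eq_iff)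
    then show ?thesis
      using that group.norm_dist_self[OF group_pruefer_group proper_norm_pruefer_group]
      by (simp add: g_def frac_def norm_dist_integer_group)
  qed
  ultimately show ?thesis
    unfolding coarse_equivalence_def by (intro conjI exI[of _ g] exI[of _ 0]) auto
qed

theorem coarsely_split_dyadic: "coarsely_split integer_group dyadic_group pruefer_group of_int frac"
proof -
  have "l1_dist (norm_dist integer_group (\<lambda>a. \<bar>real_of_int a\<bar>)) (norm_dist pruefer_group log_denom)
      (\<lfloor>of_int a\<rfloor>, frac (of_int a)) (a, \<one>\<^bsub>pruefer_group\<^esub>) = 0" for a
    by (simp add: norm_dist_pruefer_group norm_dist_integer_group)
  moreover have "norm_dist pruefer_group log_denom (frac x) (frac x) = 0"
    if "x \<in> carrier dyadic_group" for x
    using that by (simp add: norm_dist_pruefer_group dyadic_frac frac_lt_1)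
  ultimately show ?thesis
    unfolding coarsely_split_iff
    using short_exact_dyadic proper_norm_integer_group proper_norm_dyadic_group
      proper_norm_pruefer_group coarse_equivalence_floor_frac
    by (intro conjI exI[of _ "\<lambda>a. \<bar>real_of_int a\<bar>"] exI[of _ dyadic_norm] exI[of _ log_denom]
        exI[of _ "\<lambda>x. (\<lfloor>x\<rfloor>, frac x)"] exI[of _ "0::real"]) auto
qed

lemma frac_rat_eq_frac: "frac_rat = frac"
  by (simp add: fun_eq_iff frac_rat_def frac_def)

theorem mainTheorem17:
  fixes K :: nat
  assumes "K \<ge> 1"
  shows "coarsely_split (Zsum K) (Dsum K) (Psum K) incl_sum quot_sum"
proof -
  have "Zsum K = direct_power K integer_group"
    by (simp add: Zsum_def direct_power_def)
  moreover have "Dsum K = direct_power K dyadic_group"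
    by (simp add: Dsum_def direct_power_def)
  moreover have "Psum K = direct_power K pruefer_group"
    by (simp add: Psum_def direct_power_def frac_rat_eq_frac)
  moreover have "incl_sum = (\<circ>) of_int" "quot_sum = (\<circ>) frac"
    by (simp_all add: fun_eq_iff incl_sum_def quot_sum_def frac_rat_eq_frac)
  ultimately show ?thesis
    using coarsely_split_direct_power[OF coarsely_split_dyadic] by simp
qed

end
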